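(* Suppose Assumption A and Assumption B (defined in the context) hold for the dynamic accuracy DFO algorithm described in the context, whose criticality parameter satisfies $\epsilon\in(0,1)$. Suppose $\|\nabla f(\theta^k)\|\ge\epsilon$ for all $k=0,\ldots,k_\epsilon$. Then for all $k\le k_\epsilon$, $$\Delta^k\ge\Delta_{\min}:=\gamma_{\rm dec}\min\left(\Delta^0,\frac{c_0\epsilon}{\kappa_{\rm eg}+1},\frac{\gamma_{\rm dec}\epsilon}{\kappa_{\rm eg}+1}\right)>0,$$ where $c_0:=\min\left(\frac{1-\eta_2-2\eta_1'}{4\kappa_{\rm ef}},\frac{1}{\kappa_H}\right)$.
   Context: Setting. Let $n,d\ge 1$ and $r=(r_1,\ldots,r_n):\mathbb{R}^d\to\mathbb{R}^n$, with objective $f(\theta)=\frac1n\|r(\theta)\|^2=\frac1n\sum_{i=1}^n r_i(\theta)^2$ (Euclidean norm). In the application, $r_i(\theta)=\|\hat x_i(\theta)-x_i\|$ where $\hat x_i(\theta)$ is the minimizer of a lower-level problem that can only be computed approximately. The algorithm never sees $r$ exactly: for any $\theta$ it can compute an approximation $\tilde r(\theta)$ (in the application $\tilde r_i(\theta)=\|\tilde x_i(\theta)-x_i\|$ with $\tilde x_i(\theta)$ an approximate minimizer whose error can be made as small as desired), and sets $\tilde f(\theta)=\frac1n\|\tilde r(\theta)\|^2$. We say $\tilde f(\theta)$ is evaluated with accuracy $\delta$ if $|\tilde f(\theta)-f(\theta)|\le\delta$. Models. At iteration $k$ the algorithm holds an iterate $\theta^k$, a radius $\Delta^k>0$ (here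 $\Delta^k$ denotes its value after the criticality and accuracy phases of iteration $k$), and interpolation points $z^0=\theta^k,z^1,\ldots,z^d\in\mathbb{R}^d$ with $z^1-\theta^k,\ldots,z^d-\theta^k$ linearly independent; $J^k\in\mathbb{R}^{n\times d}$ is the unique matrix with $\tilde r(\theta^k)+J^k(z^t-\theta^k)=\tilde r(z^t)$ for $t=1,\ldots,d$. Set $M^k(s)=\tilde r(\theta^k)+J^k s$ and $m^k(s)=\frac1n\|M^k(s)\|^2=\tilde f(\theta^k)+(g^k)^Ts+\frac12 s^TH^ks$ with $g^k=\frac2n (J^k)^T\tilde r(\theta^k)$, $H^k=\frac2n(J^k)^TJ^k$. Fixed constants $\kappa_{\rm ef},\kappa_{\rm eg}>0$ (independent of $k,\theta^k,\Delta^k$) are given, and $m^k$ is called fully linear in $B(\theta^k,\Delta^k)$ if $|f(\theta^k+s)-m^k(s)|\le\kappa_{\rm ef}(\Delta^k)^2$ and $\|\nabla f(\theta^k+s)-\nabla m^k(s)\|\le\kappa_{\rm eg}\Delta^k$ for all $\|s\|\le\Delta^k$. The algorithm has a procedure which, by replacing interpolation points, makes the model fully linear in a given ball. Algorithm. Parameters: $\Delta_{\max}>0$, $0<\gamma_{\rm dec}<1<\gamma_{\rm inc}$, $0<\eta_1\le\eta_2<1$, $0<\eta_1'<\min(\eta_1,1-\eta_2)/2$, $\epsilon>0$; inputs $\theta^0\in\mathbb{R}^d$, $0<\Delta^0\le\Delta_{\max}$. Build an initial model $m^0$ from an arbitrary interpolation set. For $k=0,1,2,\ldots$: (1) [accuracy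 phase] repeat: (a) except on the first pass, re-evaluate $\tilde f(\theta^k)$ with accuracy $\delta^k\le\eta_1'[m^k(0)-m^k(s^k)]$ using the $s^k$ from the previous pass; (b) [criticality phase] if $\|g^k\|\le\epsilon$, replace $\Delta^k$ by $\gamma_{\rm dec}^i\Delta^k$ for $i=0,1,2,\ldots$ (making the model fully linear in the current ball) until $m^k$ is fully linear in $B(\theta^k,\Delta^k)$ and $\Delta^k\le\|g^k\|$; (c) compute $s^k$ with $\|s^k\|\le\Delta^k$ approximately minimizing $m^k$ over that ball; until $\tilde f(\theta^k)$ has been evaluated with accuracy $\delta^k\le\eta_1'[m^k(0)-m^k(s^k)]$. (2) Evaluate $\tilde f(\theta^k+s^k)$ with accuracy $\delta^k_+\le\eta_1'[m^k(0)-m^k(s^k)]$ and set $\tilde\rho^k=\frac{\tilde f(\theta^k)-\tilde f(\theta^k+s^k)}{m^k(0)-m^k(s^k)}$. (3) Set $\theta^{k+1}=\theta^k+s^k$ if $\tilde\rho^k\ge\eta_2$, or if $\tilde\rho^k\ge\eta_1$ and $m^k$ is fully linear in $B(\theta^k,\Delta^k)$; otherwise $\theta^{k+1}=\theta^k$. Set $\Delta^{k+1}=\min(\gamma_{\rm inc}\Delta^k,\Delta_{\max})$ if $\tilde\rho^k\ge\eta_2$; $\Delta^{k+1}=\Delta^k$ if $\tilde\rho^k<\eta_2$ and $m^k$ is not fully linear in $B(\theta^k,\Delta^k)$; $\Delta^{k+1}=\gamma_{\rm dec}\Delta^k$ otherwise. (4) If $\theta^{k+1}=\theta^k+s^k$,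 form $m^{k+1}$ by adding $\theta^{k+1}$ to the interpolation set (removing an existing point); otherwise set $m^{k+1}=m^k$ if $m^k$ is fully linear in $B(\theta^k,\Delta^k)$, else form $m^{k+1}$ by making $m^k$ fully linear in $B(\theta^{k+1},\Delta^{k+1})$. Assumption A: the set $\mathcal{B}=\{z: \|z-\theta\|\le\Delta_{\max}\text{ for some }\theta\text{ with }f(\theta)\le f(\theta^0)\}$ is bounded, and $r$ is continuously differentiable on $\mathcal{B}$ with $\partial r$ Lipschitz continuous with constant $L_J$ on $\mathcal{B}$. Assumption B: for all $k$, $m^k(0)-m^k(s^k)\ge\frac12\|g^k\|\min\left(\Delta^k,\frac{\|g^k\|}{\|H^k\|+1}\right)$, and there is $\kappa_H\ge1$ with $\|H^k\|+1\le\kappa_H$ for all $k$. *)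

theory Defs
  imports "HOL-Analysis.Analysis"
begin

text \<open>Parameters are vectors in R^d (index type 'd), residuals in R^n (index type 'n).
  Matrices J in R^{n x d} are of type real^'d^'n.\<close>

definition fobj :: "(real^'d \<Rightarrow> real^'n) \<Rightarrow> real^'d \<Rightarrow> real" where
  "fobj r \<theta> = norm (r \<theta>) ^ 2 / real CARD('n)"

definition grad :: "(real^'d \<Rightarrow> real) \<Rightarrow> real^'d \<Rightarrow> real^'d" where
  "grad F x = (THE G. (F has_derivative (\<lambda>h. G \<bullet> h)) (at x))"

text \<open>Model m(s) = (1/n) |rt + J s|^2 built from rt = tilde r(theta^k) and J = J^k.\<close>
definition mval :: "real^'n \<Rightarrow> real^'d^'n \<Rightarrow> real^'d \<Rightarrow> real" where
  "mval rt J s = norm (rt + J *v s) ^ 2 / real CARD('n)"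

definition mg :: "real^'n \<Rightarrow> real^'d^'n \<Rightarrow> real^'d" where
  "mg rt J = (2 / real CARD('n)) *\<^sub>R (transpose J *v rt)"

definition mH :: "real^'d^'n \<Rightarrow> real^'d^'d" where
  "mH J = (2 / real CARD('n)) *\<^sub>R (transpose J ** J)"

definition mgrad :: "real^'n \<Rightarrow> real^'d^'n \<Rightarrow> real^'d \<Rightarrow> real^'d" where
  "mgrad rt J s = mg rt J + mH J *v s"

definition matnorm :: "real^'d^'d \<Rightarrow> real" where
  "matnorm H = onorm (\<lambda>x. H *v x)"

definition fully_linear ::
  "(real^'d \<Rightarrow> real) \<Rightarrow> real \<Rightarrow> real \<Rightarrow> real^'d \<Rightarrow> real \<Rightarrow> real^'n \<Rightarrow> real^'d^'n \<Rightarrow> bool" where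
  "fully_linear F kef keg \<theta> D rt J \<longleftrightarrow>
     (\<forall>s. norm s \<le> D \<longrightarrow>
        \<bar>F (\<theta> + s) - mval rt J s\<bar> \<le> kef * D ^ 2 \<and>
        norm (grad F (\<theta> + s) - mgrad rt J s) \<le> keg * D)"

definition assumption_A :: "(real^'d \<Rightarrow> real^'n) \<Rightarrow> real^'d \<Rightarrow> real \<Rightarrow> real \<Rightarrow> bool" where
  "assumption_A r \<theta>0 Dmax LJ \<longleftrightarrow>
    (let B = {z. \<exists>\<theta>. fobj r \<theta> \<le> fobj r \<theta>0 \<and> dist z \<theta> \<le> Dmax} in
      bounded B \<and>
      (\<exists>r'. (\<forall>z\<in>B. (r has_derivative r' z) (at z)) \<and>
            (\<forall>z\<in>B. \<forall>w\<in>B. onorm (\<lambda>h. r' z h - r' w h) \<le> LJ * dist z w)))"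

definition assumption_B :: "real \<Rightarrow> nat \<Rightarrow> (nat \<Rightarrow> real) \<Rightarrow> (nat \<Rightarrow> real^'n)
    \<Rightarrow> (nat \<Rightarrow> real^'d^'n) \<Rightarrow> (nat \<Rightarrow> real^'d) \<Rightarrow> bool" where
  "assumption_B kH K D rt J s \<longleftrightarrow>
    (\<forall>k\<le>K.
       mval (rt k) (J k) 0 - mval (rt k) (J k) (s k)
         \<ge> 1/2 * norm (mg (rt k) (J k)) *
            min (D k) (norm (mg (rt k) (J k)) / (matnorm (mH (J k)) + 1))
     \<and> matnorm (mH (J k)) + 1 \<le> kH)"

text \<open>A run (iterations 0..K) of the dynamic accuracy DFO algorithm.
  theta k = iterate, Dpre k = radius at the start of iteration k,
  D k = radius after the criticality and accuracy phases of iteration k,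
  rt k = final (most accurate) evaluation tilde r(theta^k), J k = final model matrix,
  s k = step, rtp k = evaluation tilde r(theta^k + s^k).\<close>
definition dfo_run ::
  "(real^'d \<Rightarrow> real^'n) \<Rightarrow> real \<Rightarrow> real \<Rightarrow> real \<Rightarrow> real \<Rightarrow> real \<Rightarrow> real \<Rightarrow> real \<Rightarrow> real
   \<Rightarrow> real \<Rightarrow> real^'d \<Rightarrow> real \<Rightarrow> nat
   \<Rightarrow> (nat \<Rightarrow> real^'d) \<Rightarrow> (nat \<Rightarrow> real) \<Rightarrow> (nat \<Rightarrow> real) \<Rightarrow> (nat \<Rightarrow> real^'n)
   \<Rightarrow> (nat \<Rightarrow> real^'d^'n) \<Rightarrow> (nat \<Rightarrow> real^'d) \<Rightarrow> (nat \<Rightarrow> real^'n) \<Rightarrow> bool" where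
  "dfo_run r kef keg Dmax gdec ginc eta1 eta2 eta1' eps \<theta>0 Delta0 K \<theta> Dpre D rt J s rtp \<longleftrightarrow>
    \<theta> 0 = \<theta>0 \<and> Dpre 0 = Delta0 \<and>
    (\<forall>k\<le>K.
      (let F = fobj r; m = mval (rt k) (J k); g = mg (rt k) (J k);
           dec = m 0 - m (s k);
           FL = fully_linear F kef keg (\<theta> k) (D k) (rt k) (J k);
           fp = norm (rtp k) ^ 2 / real CARD('n);
           \<rho> = (m 0 - fp) / dec in
       \<comment> \<open>criticality phase(s): the radius went down by j rejected checks; every rejected
           radius had (after being made fully linear there) a model gradient smaller than it\<close>
       (\<exists>j. D k = gdec ^ j * Dpre k \<and>
          (\<forall>i<j. \<exists>(rt'::real^'n) (J'::real^'d^'n). fully_linear F kef keg (\<theta> k) (gdec ^ i * Dpre k) rt' J'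
                          \<and> norm (mg rt' J') < gdec ^ i * Dpre k)) \<and>
       \<comment> \<open>final criticality check passed\<close>
       (norm g \<le> eps \<longrightarrow> FL \<and> D k \<le> norm g) \<and>
       \<comment> \<open>trust-region step\<close>
       norm (s k) \<le> D k \<and>
       \<comment> \<open>accuracy of tilde f(theta^k) = m^k(0) (end of accuracy phase)\<close>
       \<bar>m 0 - F (\<theta> k)\<bar> \<le> eta1' * dec \<and>
       (k < K \<longrightarrow>
          \<comment> \<open>step 2: accuracy of tilde f(theta^k + s^k)\<close>
          \<bar>fp - F (\<theta> k + s k)\<bar> \<le> eta1' * dec \<and>
          \<comment> \<open>step 3: updates\<close>
          \<theta> (Suc k) = (if \<rho> \<ge> eta2 \<or> (\<rho> \<ge> eta1 \<and> FL) then \<theta> k + s k else \<theta> k) \<and>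
          Dpre (Suc k) = (if \<rho> \<ge> eta2 then min (ginc * D k) Dmax
                          else if \<not> FL then D k else gdec * D k))))"

end

theory Submission
  imports Defs
begin

text \<open>While the radius is small compared with \<open>\<epsilon>\<close>, two mechanisms keep it from shrinking
  further. In the criticality phase a radius \<open>R\<close> is only rejected when the fully linear model
  gradient is below \<open>R\<close>, and then \<open>\<epsilon> \<le> \<parallel>\<nabla>f\<parallel> < (\<kappa>\<^sub>e\<^sub>g + 1) R\<close>. In the trust-region update a fully
  linear model on a radius below \<open>c\<^sub>0 \<epsilon> / (\<kappa>\<^sub>e\<^sub>g + 1)\<close> has a gradient so large compared with the
  radius that the Cauchy decrease dominates both the model error \<open>\<kappa>\<^sub>e\<^sub>f \<Delta>\<^sup>2\<close> and the evaluation
  errors, so the step is very successful and the radius is not decreased. Hence each radius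
  reduction starts from a radius bounded below, and induction over the iterations gives
  the bound.\<close>

lemma mgrad_zero [simp]: "mgrad rt J 0 = mg rt J"
  by (simp add: mgrad_def)

lemma matnorm_nonneg: "0 \<le> matnorm H"
  unfolding matnorm_def by (rule onorm_pos_le) (simp add: matrix_vector_mul_bounded_linear)

lemma fully_linear_norm_grad_le:
  assumes "fully_linear F kef keg \<theta> R rt J" and "0 \<le> R"
  shows "norm (grad F \<theta>) \<le> norm (mg rt J) + keg * R"
proof -
  have "norm (grad F \<theta> - mg rt J) \<le> keg * R"
    using assms unfolding fully_linear_def by (metis add_0_right mgrad_zero norm_zero)
  moreover have "norm (grad F \<theta>) \<le> norm (mg rt J) + norm (grad F \<theta> - mg rt J)"
    by (metis add.commute diff_add_cancel norm_triangle_ineq)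
  ultimately show ?thesis by linarith
qed

lemma criticality_radius_ge:
  fixes F :: "real^'d \<Rightarrow> real"
  assumes "0 < gdec" and "0 \<le> keg" and "eps \<le> norm (grad F \<theta>)"
    and rejected: "\<forall>i<j. \<exists>(rt'::real^'n) (J'::real^'d^'n).
                     fully_linear F kef keg \<theta> (gdec ^ i * Dp) rt' J' \<and> norm (mg rt' J') < gdec ^ i * Dp"
  shows "min Dp (gdec * eps / (keg + 1)) \<le> gdec ^ j * Dp"
proof (cases j)
  case 0
  then show ?thesis by simp
next
  case (Suc i)
  define R where "R = gdec ^ i * Dp"
  obtain rt' :: "real^'n" and J' :: "real^'d^'n"
    where fl: "fully_linear F kef keg \<theta> R rt' J'" and small: "norm (mg rt' J') < R"
    using rejected Suc R_def by auto
  have "eps \<le> norm (mg rt' J') + keg * R"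
    using fully_linear_norm_grad_le [OF fl] small assms(3) by (meson norm_ge_zero order.trans less_imp_le)
  with small have "eps / (keg + 1) < R"
    using assms(2) by (simp add: field_simps)
  then have "gdec * eps / (keg + 1) < gdec ^ j * Dp"
    using assms(1) Suc R_def by (simp add: mult.assoc divide_inverse)
  then show ?thesis by simp
qed

lemma fully_linear_small_radius_norm_mg_gt:
  assumes "fully_linear F kef keg \<theta> D rt J" and "0 \<le> D" and "0 \<le> keg"
    and "eps \<le> norm (grad F \<theta>)" and "0 \<le> c" "c \<le> 1"
    and "D < c * eps / (keg + 1)"
  shows "D < c * norm (mg rt J)"
proof -
  have "c * (eps - keg * D) \<le> c * norm (mg rt J)"
    using fully_linear_norm_grad_le [OF assms(1,2)] assms(4,5) by (intro mult_left_mono) auto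
  moreover have "c * keg * D \<le> keg * D"
    using assms(2,3,5,6) by (simp add: mult_left_le_one_le mult.assoc)
  moreover have "(keg + 1) * D < c * eps"
    using assms(3,7) by (simp add: field_simps)
  ultimately show ?thesis by (simp add: algebra_simps)
qed

lemma fully_linear_small_radius_very_successful:
  fixes F :: "real^'d \<Rightarrow> real" and rt :: "real^'n" and J :: "real^'d^'n" and sk :: "real^'d"
  defines "dec \<equiv> mval rt J 0 - mval rt J sk"
  assumes fl: "fully_linear F kef keg \<theta> D rt J" and step: "norm sk \<le> D" and "0 < D"
    and radius: "D \<le> c * norm (mg rt J)"
    and c_margin: "c \<le> (1 - eta2 - 2 * eta1') / (4 * kef)" and c_kH: "c \<le> 1 / kH"
    and "0 < kef" and kH: "matnorm (mH J) + 1 \<le> kH"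
    and cauchy: "1/2 * norm (mg rt J) * min D (norm (mg rt J) / (matnorm (mH J) + 1)) \<le> dec"
    and accurate: "\<bar>fp - F (\<theta> + sk)\<bar> \<le> eta1' * dec"
    and "eta2 \<le> 1"
  shows "eta2 \<le> (mval rt J 0 - fp) / dec"
proof -
  define g where "g = norm (mg rt J)"
  define margin where "margin = 1 - eta2 - 2 * eta1'"
  have "0 < c * g" using \<open>0 < D\<close> radius g_def by simp
  then have "0 < c" "0 < g"
    using g_def by (auto simp: zero_less_mult_iff)
  have "0 < kH"
    using \<open>0 < c\<close> c_kH zero_less_divide_1_iff [of kH] by linarith
  have "0 < margin / (4 * kef)"
    using \<open>0 < c\<close> c_margin unfolding margin_def by linarith
  then have "0 < margin"
    using \<open>0 < kef\<close> by (simp add: zero_less_divide_iff)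
  have "D \<le> g / kH"
    using radius c_kH \<open>0 < g\<close> g_def
    by (metis order.trans mult_right_mono less_imp_le times_divide_eq_left mult_1)
  also have "\<dots> \<le> g / (matnorm (mH J) + 1)"
  proof (rule divide_left_mono)
    show "0 < kH * (matnorm (mH J) + 1)"
      using \<open>0 < kH\<close> matnorm_nonneg [of "mH J"] by simp
  qed (use kH \<open>0 < g\<close> in auto)
  finally have dec_ge: "1/2 * g * D \<le> dec"
    using cauchy g_def by (simp add: min_absorb1)
  have "\<bar>F (\<theta> + sk) - mval rt J sk\<bar> \<le> kef * D\<^sup>2"
    using fl step unfolding fully_linear_def by simp
  also have "\<dots> \<le> kef * (c * g) * D"
    using radius \<open>0 < D\<close> \<open>0 < kef\<close> g_def by (simp add: power2_eq_square)
  also have "\<dots> \<le> margin / 4 * g * D"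
    using c_margin \<open>0 < kef\<close> \<open>0 < g\<close> \<open>0 < D\<close> margin_def by (simp add: field_simps)
  also have "\<dots> \<le> margin / 2 * dec"
    using dec_ge \<open>0 < margin\<close> by (simp add: field_simps)
  finally have model_error: "\<bar>F (\<theta> + sk) - mval rt J sk\<bar> \<le> margin / 2 * dec" .
  have "0 < 1/2 * g * D" using \<open>0 < g\<close> \<open>0 < D\<close> by simp
  with dec_ge have "0 < dec" by linarith
  have "eta2 * dec \<le> dec" using \<open>0 < dec\<close> \<open>eta2 \<le> 1\<close> by simp
  moreover have "margin / 2 * dec = dec / 2 - eta2 * dec / 2 - eta1' * dec"
    unfolding margin_def by (simp add: field_simps)
  ultimately have "eta2 * dec \<le> mval rt J 0 - fp"
    using model_error accurate dec_def by linarith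
  with \<open>0 < dec\<close> show ?thesis by (simp add: pos_le_divide_eq)
qed

lemma dfo_run_radius_ge_criticality:
  fixes r :: "real^'d \<Rightarrow> real^'n"
  assumes run: "dfo_run r kef keg Dmax gdec ginc eta1 eta2 eta1' eps \<theta>0 Delta0 K \<theta> Dpre D rt J s rtp"
    and "k \<le> K" and "eps \<le> norm (grad (fobj r) (\<theta> k))" and "0 < gdec" and "0 \<le> keg"
  shows "min (Dpre k) (gdec * eps / (keg + 1)) \<le> D k"
proof -
  obtain j where "D k = gdec ^ j * Dpre k"
    and "\<forall>i<j. \<exists>(rt'::real^'n) (J'::real^'d^'n).
           fully_linear (fobj r) kef keg (\<theta> k) (gdec ^ i * Dpre k) rt' J' \<and> norm (mg rt' J') < gdec ^ i * Dpre k"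
    using run \<open>k \<le> K\<close> unfolding dfo_run_def Let_def by blast
  then show ?thesis
    using criticality_radius_ge [OF \<open>0 < gdec\<close> \<open>0 \<le> keg\<close> assms(3)] by simp
qed

lemma dfo_run_next_radius_ge:
  fixes r :: "real^'d \<Rightarrow> real^'n"
  assumes run: "dfo_run r kef keg Dmax gdec ginc eta1 eta2 eta1' eps \<theta>0 Delta0 K \<theta> Dpre D rt J s rtp"
    and B: "assumption_B kH K D rt J s"
    and "k < K" and "eps \<le> norm (grad (fobj r) (\<theta> k))" and "0 < D k"
    and "0 < gdec" and "1 < ginc" and "0 \<le> keg" and "0 < kef" and "eta2 \<le> 1" and "1 \<le> kH"
    and "0 \<le> c" and c_margin: "c \<le> (1 - eta2 - 2 * eta1') / (4 * kef)" and c_kH: "c \<le> 1 / kH"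
  shows "min (D k) (min Dmax (gdec * (c * eps / (keg + 1)))) \<le> Dpre (Suc k)"
proof -
  define FL where "FL = fully_linear (fobj r) kef keg (\<theta> k) (D k) (rt k) (J k)"
  define dec where "dec = mval (rt k) (J k) 0 - mval (rt k) (J k) (s k)"
  define fp where "fp = norm (rtp k) ^ 2 / real CARD('n)"
  define \<rho> where "\<rho> = (mval (rt k) (J k) 0 - fp) / dec"
  have "k \<le> K" using \<open>k < K\<close> by simp
  note iteration = run [unfolded dfo_run_def Let_def, THEN conjunct2, THEN conjunct2, rule_format, OF \<open>k \<le> K\<close>]
  have update: "Dpre (Suc k) = (if \<rho> \<ge> eta2 then min (ginc * D k) Dmax
                                else if \<not> FL then D k else gdec * D k)"
    and accurate: "\<bar>fp - fobj r (\<theta> k + s k)\<bar> \<le> eta1' * dec"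
    and step: "norm (s k) \<le> D k"
    using iteration \<open>k < K\<close> unfolding FL_def dec_def fp_def \<rho>_def by blast+
  consider "\<rho> \<ge> eta2" | "\<not> \<rho> \<ge> eta2" "\<not> FL" | "\<not> \<rho> \<ge> eta2" FL by blast
  then show ?thesis
  proof cases
    case 1
    have "D k \<le> ginc * D k" using \<open>1 < ginc\<close> \<open>0 < D k\<close> by simp
    with 1 show ?thesis using update by (auto simp: min_le_iff_disj)
  next
    case 2
    then show ?thesis using update by simp
  next
    case 3
    have "1 / kH \<le> 1" using \<open>1 \<le> kH\<close> by simp
    with c_kH have "c \<le> 1" by linarith
    have "c * eps / (keg + 1) \<le> D k"
    proof (rule ccontr)
      assume "\<not> c * eps / (keg + 1) \<le> D k"
      then have "D k < c * norm (mg (rt k) (J k))"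
        using fully_linear_small_radius_norm_mg_gt [of "fobj r"] 3 \<open>0 < D k\<close> assms(4,8,12) \<open>c \<le> 1\<close>
        unfolding FL_def by (meson less_imp_le not_le)
      then have "eta2 \<le> \<rho>"
        using fully_linear_small_radius_very_successful [of "fobj r"] 3 step \<open>0 < D k\<close> c_margin c_kH
          \<open>0 < kef\<close> B \<open>k \<le> K\<close> accurate \<open>eta2 \<le> 1\<close>
        unfolding FL_def \<rho>_def dec_def assumption_B_def by (meson less_imp_le)
      with 3 show False by simp
    qed
    then have "gdec * (c * eps / (keg + 1)) \<le> gdec * D k"
      using \<open>0 < gdec\<close> by (intro mult_left_mono) auto
    then show ?thesis using update 3 by (simp add: min_le_iff_disj)
  qed
qed

theorem lemma8:
  fixes r :: "real^'d \<Rightarrow> real^'n"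
    and \<theta> :: "nat \<Rightarrow> real^'d" and Dpre D :: "nat \<Rightarrow> real"
    and rt rtp :: "nat \<Rightarrow> real^'n" and J :: "nat \<Rightarrow> real^'d^'n" and s :: "nat \<Rightarrow> real^'d"
    and \<theta>0 :: "real^'d"
    and kef keg kH LJ Dmax gdec ginc eta1 eta2 eta1' eps Delta0 :: real
    and K :: nat
  assumes "0 < Dmax" "0 < gdec" "gdec < 1" "1 < ginc"
    and "0 < eta1" "eta1 \<le> eta2" "eta2 < 1" "0 < eta1'" "eta1' < min eta1 (1 - eta2) / 2"
    and "0 < eps" "eps < 1"
    and "0 < Delta0" "Delta0 \<le> Dmax"
    and "0 < kef" "0 < keg" "1 \<le> kH"
    and "assumption_A r \<theta>0 Dmax LJ"
    and "assumption_B kH K D rt J s"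
    and "dfo_run r kef keg Dmax gdec ginc eta1 eta2 eta1' eps \<theta>0 Delta0 K \<theta> Dpre D rt J s rtp"
    and "\<forall>k\<le>K. norm (grad (fobj r) (\<theta> k)) \<ge> eps"
  shows "let c0 = min ((1 - eta2 - 2 * eta1') / (4 * kef)) (1 / kH);
             Dmin = gdec * min Delta0 (min (c0 * eps / (keg + 1)) (gdec * eps / (keg + 1)))
         in 0 < Dmin \<and> (\<forall>k\<le>K. Dmin \<le> D k)"
proof -
  note run = assms(19) and grad_ge = assms(20)[rule_format]
  define c0 where "c0 = min ((1 - eta2 - 2 * eta1') / (4 * kef)) (1 / kH)"
  define A where "A = min Delta0 (min (c0 * eps / (keg + 1)) (gdec * eps / (keg + 1)))"
  define Dmin where "Dmin = gdec * A"
  have "0 < 1 - eta2 - 2 * eta1'" using assms(9) by (simp add: min_def split: if_splits)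
  then have "0 < c0" using assms(14,16) unfolding c0_def by simp
  then have "0 < A" using assms(2,10,12,15) unfolding A_def by simp
  then have "0 < Dmin" and "Dmin \<le> A" using assms(2,3) unfolding Dmin_def by simp_all
  have "A \<le> Delta0" and "A \<le> c0 * eps / (keg + 1)" and "A \<le> gdec * eps / (keg + 1)"
    unfolding A_def by auto
  have c0_bound: "Dmin \<le> gdec * (c0 * eps / (keg + 1))"
    unfolding Dmin_def using \<open>A \<le> c0 * eps / (keg + 1)\<close> assms(2) by (intro mult_left_mono) auto
  have radius_ge: "Dmin \<le> D k" if "k \<le> K" and "Dmin \<le> Dpre k" for k
    using dfo_run_radius_ge_criticality [OF run that(1) grad_ge [OF that(1)]] assms(2,15) that(2)
      \<open>Dmin \<le> A\<close> \<open>A \<le> gdec * eps / (keg + 1)\<close> by linarith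
  have "Dmin \<le> Dpre k" if "k \<le> K" for k
    using that
  proof (induction k)
    case 0
    have "Dpre 0 = Delta0" using run unfolding dfo_run_def by simp
    then show ?case using \<open>Dmin \<le> A\<close> \<open>A \<le> Delta0\<close> by simp
  next
    case (Suc k)
    then have "Dmin \<le> D k" using radius_ge by simp
    then have "Dmin \<le> min (D k) (min Dmax (gdec * (c0 * eps / (keg + 1))))"
      using c0_bound \<open>Dmin \<le> A\<close> \<open>A \<le> Delta0\<close> assms(13) by simp
    also have "\<dots> \<le> Dpre (Suc k)"
      by (rule dfo_run_next_radius_ge [OF run assms(18)])
        (use Suc.prems grad_ge assms(2,4,7,14-16) \<open>0 < c0\<close> \<open>0 < Dmin\<close> \<open>Dmin \<le> D k\<close>
          in \<open>auto simp: c0_def\<close>)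
    finally show ?case .
  qed
  with radius_ge \<open>0 < Dmin\<close> show ?thesis
    unfolding Let_def c0_def [symmetric] A_def [symmetric] Dmin_def [symmetric] by blast
qed

end
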